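(* Under the hypotheses of Theorem 3 (with $F_1,F_2$ defined from the given code and from $\beta_1,\beta_2,\lambda_1,\lambda_2,\nu_1$ satisfying $\Sigma_1\le1$, $\Sigma_2\le1$ everywhere), for all $\gamma_1,\gamma_2>0$, $$\epsilon_1\ge\mathbb P[F_1\ge\log M_1+\gamma_1]-e^{-\gamma_1},\qquad \epsilon_2\ge\mathbb P[F_2\ge\log M_2+\gamma_2]-e^{-\gamma_2}.$$
   Context: Setting: $X$ with law $P_X$ on $\mathcal X$; measurable distortion measures $\mathsf d_1\colon\mathcal X\times\mathcal Y_1\to[0,\infty)$, $\mathsf d_2\colon\mathcal X\times\mathcal Y_2\to[0,\infty)$ (all $\sigma$-algebras containing singletons). For measurable $\beta_1\colon\mathcal X\to(0,\infty)$, $\beta_2\colon\mathcal X\times\mathcal Y_1\to(0,\infty)$ and $\lambda_1,\lambda_2,\nu_1\ge0$, $\Sigma_2(y_1,y_2)=\mathbb E\big[\exp(-\frac{\lambda_1}{1+\nu_1}\mathsf d_1(X,y_1)-\lambda_2\mathsf d_2(X,y_2))/(\beta_1(X)\beta_2(X|y_1)^{\nu_1/(1+\nu_1)})\big]$ and $\Sigma_1(y_1)=\mathbb E\big[\exp(-\frac{\lambda_1}{1+\nu_1}\mathsf d_1(X,y_1))\beta_2(X|y_1)^{1/(1+\nu_1)}/\beta_1(X)\big]$. An $(M_1,M_2,d_1,d_2,\epsilon_1,\epsilon_2)$ code: possibly randomized encoders $P_{W_1|X}$ into $\{1,\dots,M_1\}$, $P_{W_2|XW_1}$ into $\{1,\dots,\lfloor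 M_2/M_1\rfloor\}$ and decoders $P_{Y_1|W_1}$, $P_{Y_2|W_1W_2}$, with $\mathcal A_1=\{\mathsf d_1(X,Y_1)\le d_1\}$, $\mathcal A_2=\mathcal A_1\cap\{\mathsf d_2(X,Y_2)\le d_2\}$, $\mathbb P[\mathcal A_1^c]\le\epsilon_1$, $\mathbb P[\mathcal A_2^c]\le\epsilon_2$. $F_1=\log\frac{\beta_2(X|Y_1)^{1/(1+\nu_1)}}{\beta_1(X)}-\frac{\lambda_1}{1+\nu_1}d_1$, $F_2=\log\frac{\beta_2(X|Y_1)^{-\nu_1/(1+\nu_1)}}{\beta_1(X)}-\frac{\lambda_1}{1+\nu_1}d_1-\lambda_2d_2$. *)

theory Defs
  imports "HOL-Probability.Probability"
begin

definition Sigma1 ::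
  "'x measure \<Rightarrow> ('x \<Rightarrow> 'y1 \<Rightarrow> real) \<Rightarrow> ('x \<Rightarrow> real) \<Rightarrow> ('x \<Rightarrow> 'y1 \<Rightarrow> real)
   \<Rightarrow> real \<Rightarrow> real \<Rightarrow> 'y1 \<Rightarrow> ennreal" where
  "Sigma1 MX dist1 \<beta>1 \<beta>2 lam1 \<nu>1 y1 =
     (\<integral>\<^sup>+ x. ennreal (exp (- (lam1 / (1 + \<nu>1)) * dist1 x y1)
                   * \<beta>2 x y1 powr (1 / (1 + \<nu>1)) / \<beta>1 x) \<partial>MX)"

definition Sigma2 ::
  "'x measure \<Rightarrow> ('x \<Rightarrow> 'y1 \<Rightarrow> real) \<Rightarrow> ('x \<Rightarrow> 'y2 \<Rightarrow> real) \<Rightarrow> ('x \<Rightarrow> real)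
   \<Rightarrow> ('x \<Rightarrow> 'y1 \<Rightarrow> real) \<Rightarrow> real \<Rightarrow> real \<Rightarrow> real \<Rightarrow> 'y1 \<Rightarrow> 'y2 \<Rightarrow> ennreal" where
  "Sigma2 MX dist1 dist2 \<beta>1 \<beta>2 lam1 lam2 \<nu>1 y1 y2 =
     (\<integral>\<^sup>+ x. ennreal (exp (- (lam1 / (1 + \<nu>1)) * dist1 x y1 - lam2 * dist2 x y2)
                   / (\<beta>1 x * \<beta>2 x y1 powr (\<nu>1 / (1 + \<nu>1)))) \<partial>MX)"

text \<open>Joint law of (X, Y1, Y2) induced by the source law MX, the (randomized) encoders
  e1 = P_{W1|X}, e2 = P_{W2|X W1} and decoders g1 = P_{Y1|W1}, g2 = P_{Y2|W1 W2}.\<close>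

definition joint_law ::
  "'x measure \<Rightarrow> 'y1 measure \<Rightarrow> 'y2 measure \<Rightarrow> ('x \<Rightarrow> nat measure) \<Rightarrow> ('x \<times> nat \<Rightarrow> nat measure)
   \<Rightarrow> (nat \<Rightarrow> 'y1 measure) \<Rightarrow> (nat \<times> nat \<Rightarrow> 'y2 measure) \<Rightarrow> ('x \<times> 'y1 \<times> 'y2) measure" where
  "joint_law MX MY1 MY2 e1 e2 g1 g2 =
     MX \<bind> (\<lambda>x. e1 x \<bind> (\<lambda>w1. e2 (x, w1) \<bind> (\<lambda>w2. g1 w1 \<bind> (\<lambda>y1. g2 (w1, w2) \<bind>
       (\<lambda>y2. return (MX \<Otimes>\<^sub>M MY1 \<Otimes>\<^sub>M MY2) (x, y1, y2))))))"

definition is_code ::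
  "'x measure \<Rightarrow> 'y1 measure \<Rightarrow> 'y2 measure \<Rightarrow> ('x \<Rightarrow> 'y1 \<Rightarrow> real) \<Rightarrow> ('x \<Rightarrow> 'y2 \<Rightarrow> real)
   \<Rightarrow> nat \<Rightarrow> nat \<Rightarrow> real \<Rightarrow> real \<Rightarrow> real \<Rightarrow> real
   \<Rightarrow> ('x \<Rightarrow> nat measure) \<Rightarrow> ('x \<times> nat \<Rightarrow> nat measure)
   \<Rightarrow> (nat \<Rightarrow> 'y1 measure) \<Rightarrow> (nat \<times> nat \<Rightarrow> 'y2 measure) \<Rightarrow> bool" where
  "is_code MX MY1 MY2 dist1 dist2 M1 M2 d1 d2 \<epsilon>1 \<epsilon>2 e1 e2 g1 g2 \<longleftrightarrow>
     e1 \<in> MX \<rightarrow>\<^sub>M prob_algebra (count_space {1..M1}) \<and>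
     e2 \<in> MX \<Otimes>\<^sub>M count_space {1..M1} \<rightarrow>\<^sub>M prob_algebra (count_space {1..M2 div M1}) \<and>
     g1 \<in> count_space {1..M1} \<rightarrow>\<^sub>M prob_algebra MY1 \<and>
     g2 \<in> count_space {1..M1} \<Otimes>\<^sub>M count_space {1..M2 div M1} \<rightarrow>\<^sub>M prob_algebra MY2 \<and>
     (let P = joint_law MX MY1 MY2 e1 e2 g1 g2 in
        measure P {(x, y1, y2) \<in> space P. \<not> dist1 x y1 \<le> d1} \<le> \<epsilon>1 \<and>
        measure P {(x, y1, y2) \<in> space P. \<not> (dist1 x y1 \<le> d1 \<and> dist2 x y2 \<le> d2)} \<le> \<epsilon>2)"

end

theory Submission
  imports Defs
begin

(* For every fixed reconstruction the weights
     h1 (x, y1) = exp (-lam1/(1+nu1) dist1 x y1) beta2(x|y1)^(1/(1+nu1)) / beta1 x   and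
     h2 (x, y1, y2) = the integrand of Sigma2
   have P_X-integral at most 1.  Since Y1 depends on X only through one of the M1 messages, and
   (Y1, Y2) only through one of the M1 * (M2 div M1) <= M2 message pairs, the expectation of the
   weight under the joint law is at most the number of messages.  On the event {F >= log M + gamma}
   where the code meets the distortion constraints the weight is at least M e^gamma, so a Markov
   bound gives P[F >= log M + gamma] <= P[failure] + e^-gamma. *)

lemma prob_kernel_value:
  assumes "K \<in> M \<rightarrow>\<^sub>M prob_algebra N" and "x \<in> space M"
  shows "prob_space (K x)" and "sets (K x) = sets N" and "space (K x) = space N"
  using measurable_space[OF assms] sets_eq_imp_space_eq[of "K x" N] by (auto simp: space_prob_algebra)

lemma measurable_pair_fst_fst_snd:
  assumes "f \<in> M \<Otimes>\<^sub>M N1 \<rightarrow>\<^sub>M K"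
  shows "(\<lambda>z. f (fst z, fst (snd z))) \<in> M \<Otimes>\<^sub>M N1 \<Otimes>\<^sub>M N2 \<rightarrow>\<^sub>M K"
  by (rule measurable_compose[OF _ assms]) measurable

lemma measurable_pair_fst_snd_snd:
  assumes "f \<in> M \<Otimes>\<^sub>M N2 \<rightarrow>\<^sub>M K"
  shows "(\<lambda>z. f (fst z, snd (snd z))) \<in> M \<Otimes>\<^sub>M N1 \<Otimes>\<^sub>M N2 \<rightarrow>\<^sub>M K"
  by (rule measurable_compose[OF _ assms]) measurable

lemma nn_integral_bind_kernel:
  assumes "sets M = sets A" and "K \<in> A \<rightarrow>\<^sub>M prob_algebra N" and "f \<in> borel_measurable N"
  shows "(\<integral>\<^sup>+z. f z \<partial>(M \<bind> K)) = (\<integral>\<^sup>+x. \<integral>\<^sup>+z. f z \<partial>K x \<partial>M)"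
  using assms by (intro nn_integral_bind measurable_prob_algebraD) (simp_all cong: measurable_cong_sets)

lemma nn_integral_le_sum_count_space:
  assumes sets_N: "sets N = sets (count_space A)" and "finite A" and "subprob_space N"
  shows "(\<integral>\<^sup>+a. \<phi> a \<partial>N) \<le> (\<Sum>a\<in>A. \<phi> a)"
proof -
  have space_N: "space N = A" using sets_eq_imp_space_eq[OF sets_N] by simp
  have "(\<integral>\<^sup>+a. \<phi> a \<partial>N) = (\<integral>\<^sup>+z. (\<Sum>a\<in>A. \<phi> a * indicator {a} z) \<partial>N)"
  proof (rule nn_integral_cong)
    fix z assume "z \<in> space N"
    then have "(\<Sum>a\<in>A. \<phi> a * indicator {a} z) = (\<Sum>a\<in>{z}. \<phi> a * indicator {a} z)"
      using \<open>finite A\<close> space_N by (intro sum.mono_neutral_right) (auto simp: indicator_def)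
    then show "\<phi> z = (\<Sum>a\<in>A. \<phi> a * indicator {a} z)" by simp
  qed
  also have "\<dots> = (\<Sum>a\<in>A. \<phi> a * emeasure N {a})"
  proof (subst nn_integral_sum)
    fix a assume "a \<in> A"
    then have [measurable]: "{a} \<in> sets N" using sets_N by simp
    show "(\<lambda>z. \<phi> a * indicator {a} z) \<in> borel_measurable N" by measurable
  qed (use sets_N in \<open>auto intro!: sum.cong nn_integral_cmult_indicator\<close>)
  also have "\<dots> \<le> (\<Sum>a\<in>A. \<phi> a)"
    using subprob_space.subprob_emeasure_le_1[OF \<open>subprob_space N\<close>]
    by (intro sum_mono) (metis mult.right_neutral mult_left_mono zero_le)
  finally show ?thesis .
qed

lemma nn_integral_sum_le_card:
  assumes "finite W" and "\<And>w. w \<in> W \<Longrightarrow> F w \<in> borel_measurable M"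
    and "\<And>w. w \<in> W \<Longrightarrow> (\<integral>\<^sup>+x. F w x \<partial>M) \<le> 1"
  shows "(\<integral>\<^sup>+x. (\<Sum>w\<in>W. F w x) \<partial>M) \<le> of_nat (card W)"
proof -
  have "(\<integral>\<^sup>+x. (\<Sum>w\<in>W. F w x) \<partial>M) = (\<Sum>w\<in>W. \<integral>\<^sup>+x. F w x \<partial>M)"
    using assms(2) by (rule nn_integral_sum)
  also have "\<dots> \<le> (\<Sum>w\<in>W. 1)" using assms(3) by (rule sum_mono)
  finally show ?thesis by simp
qed

lemma nn_integral_fubini_le:
  assumes "sigma_finite_measure M" and "prob_space G" and sets_G: "sets G = sets N"
    and h[measurable]: "h \<in> borel_measurable (M \<Otimes>\<^sub>M N)"
    and sections: "\<And>y. y \<in> space N \<Longrightarrow> (\<integral>\<^sup>+x. h (x, y) \<partial>M) \<le> c"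
  shows "(\<lambda>x. \<integral>\<^sup>+y. h (x, y) \<partial>G) \<in> borel_measurable M"
    and "(\<integral>\<^sup>+x. \<integral>\<^sup>+y. h (x, y) \<partial>G \<partial>M) \<le> c"
proof -
  interpret pair_sigma_finite M G
    using assms(1,2) by (simp add: pair_sigma_finite_def prob_space_imp_sigma_finite)
  have hG[measurable]: "h \<in> borel_measurable (M \<Otimes>\<^sub>M G)"
    using h sets_G by (simp cong: measurable_cong_sets sets_pair_measure_cong)
  show "(\<lambda>x. \<integral>\<^sup>+y. h (x, y) \<partial>G) \<in> borel_measurable M" by measurable
  have "(\<integral>\<^sup>+x. \<integral>\<^sup>+y. h (x, y) \<partial>G \<partial>M) = (\<integral>\<^sup>+y. \<integral>\<^sup>+x. h (x, y) \<partial>M \<partial>G)"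
    by (rule Fubini'[symmetric]) simp
  also have "\<dots> \<le> (\<integral>\<^sup>+y. c \<partial>G)"
    using sections sets_eq_imp_space_eq[OF sets_G] by (intro nn_integral_mono) simp
  also have "\<dots> = c" using \<open>prob_space G\<close> by (simp add: prob_space.emeasure_space_1)
  finally show "(\<integral>\<^sup>+x. \<integral>\<^sup>+y. h (x, y) \<partial>G \<partial>M) \<le> c" .
qed

lemma nn_integral_fubini_pair_le:
  assumes M: "sigma_finite_measure M" and G1: "prob_space G1" and G2: "prob_space G2"
    and sets_G1: "sets G1 = sets N1" and sets_G2: "sets G2 = sets N2"
    and h[measurable]: "h \<in> borel_measurable (M \<Otimes>\<^sub>M N1 \<Otimes>\<^sub>M N2)"
    and sections: "\<And>y1 y2. y1 \<in> space N1 \<Longrightarrow> y2 \<in> space N2 \<Longrightarrow> (\<integral>\<^sup>+x. h (x, y1, y2) \<partial>M) \<le> c"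
  shows "(\<lambda>x. \<integral>\<^sup>+y1. \<integral>\<^sup>+y2. h (x, y1, y2) \<partial>G2 \<partial>G1) \<in> borel_measurable M"
    and "(\<integral>\<^sup>+x. \<integral>\<^sup>+y1. \<integral>\<^sup>+y2. h (x, y1, y2) \<partial>G2 \<partial>G1 \<partial>M) \<le> c"
proof -
  have sets_G: "sets (G1 \<Otimes>\<^sub>M G2) = sets (N1 \<Otimes>\<^sub>M N2)"
    using sets_G1 sets_G2 by (rule sets_pair_measure_cong)
  have iterated: "(\<integral>\<^sup>+y1. \<integral>\<^sup>+y2. h (x, y1, y2) \<partial>G2 \<partial>G1) = (\<integral>\<^sup>+y. h (x, y) \<partial>(G1 \<Otimes>\<^sub>M G2))"
    if "x \<in> space M" for x
  proof -
    have "(\<lambda>y. h (x, y)) \<in> borel_measurable (G1 \<Otimes>\<^sub>M G2)"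
      using that by (simp add: sets_G cong: measurable_cong_sets)
    then show ?thesis
      using sigma_finite_measure.nn_integral_fst[OF prob_space_imp_sigma_finite[OF G2], of "\<lambda>y. h (x, y)" G1]
      by simp
  qed
  note fubini = nn_integral_fubini_le[OF M prob_space_pair[OF G1 G2] sets_G h]
  have "(\<lambda>x. \<integral>\<^sup>+y. h (x, y) \<partial>(G1 \<Otimes>\<^sub>M G2)) \<in> borel_measurable M"
    using sections by (intro fubini(1)) (auto simp: space_pair_measure)
  then show "(\<lambda>x. \<integral>\<^sup>+y1. \<integral>\<^sup>+y2. h (x, y1, y2) \<partial>G2 \<partial>G1) \<in> borel_measurable M"
    using iterated by (simp cong: measurable_cong)
  have "(\<integral>\<^sup>+x. \<integral>\<^sup>+y. h (x, y) \<partial>(G1 \<Otimes>\<^sub>M G2) \<partial>M) \<le> c"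
    using sections by (intro fubini(2)) (auto simp: space_pair_measure)
  then show "(\<integral>\<^sup>+x. \<integral>\<^sup>+y1. \<integral>\<^sup>+y2. h (x, y1, y2) \<partial>G2 \<partial>G1 \<partial>M) \<le> c"
    using iterated by (simp cong: nn_integral_cong)
qed

lemma measure_le_add_exp_of_weight:
  assumes "subprob_space P" and E: "E \<in> sets P" and A: "A \<in> sets P"
    and h: "h \<in> borel_measurable P" and integral: "(\<integral>\<^sup>+z. h z \<partial>P) \<le> ennreal K" and "K > 0"
    and weight: "\<And>z. z \<in> space P \<Longrightarrow> z \<in> E \<Longrightarrow> z \<notin> A \<Longrightarrow> ennreal (K * exp \<gamma>) \<le> h z"
  shows "measure P E \<le> measure P A + exp (- \<gamma>)"
proof -
  interpret subprob_space P by fact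
  define c where "c = ennreal (exp (- \<gamma>) / K)"
  have "emeasure P E \<le> (\<integral>\<^sup>+z. indicator A z + c * h z \<partial>P)"
  proof (subst nn_integral_indicator[OF E, symmetric], rule nn_integral_mono)
    fix z assume "z \<in> space P"
    have "1 \<le> c * h z" if "z \<in> E" "z \<notin> A"
    proof -
      have "c * ennreal (K * exp \<gamma>) = 1"
        using \<open>K > 0\<close> by (simp add: c_def ennreal_mult''[symmetric] exp_minus field_simps)
      then show ?thesis using weight[OF \<open>z \<in> space P\<close> that] by (metis mult_left_mono zero_le)
    qed
    then show "indicator E z \<le> indicator A z + c * h z" by (auto simp: indicator_def)
  qed
  also have "\<dots> = emeasure P A + c * (\<integral>\<^sup>+z. h z \<partial>P)"
    using A h by (simp add: nn_integral_add nn_integral_cmult)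
  also have "\<dots> \<le> emeasure P A + c * ennreal K"
    using integral by (intro add_left_mono mult_left_mono) auto
  also have "\<dots> = ennreal (measure P A + exp (- \<gamma>))"
    using \<open>K > 0\<close> by (simp add: c_def emeasure_eq_measure ennreal_mult''[symmetric] flip: ennreal_plus)
  finally have "ennreal (measure P E) \<le> ennreal (measure P A + exp (- \<gamma>))"
    by (simp only: emeasure_eq_measure)
  then show ?thesis by (subst (asm) ennreal_le_iff) auto
qed

lemma mult_exp_le_of_ln_add_le:
  fixes K M b s t \<gamma> :: real
  assumes "0 < K" "K \<le> M" "0 < b" and "ln M + \<gamma> \<le> ln b - t" and "s \<le> t"
  shows "K * exp \<gamma> \<le> exp (- s) * b"
proof -
  have "K * exp \<gamma> \<le> M * exp \<gamma>" using assms(2) by simp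
  also have "\<dots> = exp (ln M + \<gamma>)" using assms(1,2) by (simp add: exp_add)
  also have "\<dots> \<le> exp (ln b - t)" using assms(4) by simp
  also have "\<dots> \<le> exp (- s) * b" using assms(3,5) by (simp add: exp_diff exp_minus field_simps)
  finally show ?thesis .
qed

locale two_stage_code_kernels =
  fixes MX :: "'x measure" and MY1 :: "'y1 measure" and MY2 :: "'y2 measure"
    and W1 W2 :: "nat set"
    and e1 :: "'x \<Rightarrow> nat measure" and e2 :: "'x \<times> nat \<Rightarrow> nat measure"
    and g1 :: "nat \<Rightarrow> 'y1 measure" and g2 :: "nat \<times> nat \<Rightarrow> 'y2 measure"
  assumes prob_space_MX: "prob_space MX"
    and e1_kernel[measurable]: "e1 \<in> MX \<rightarrow>\<^sub>M prob_algebra (count_space W1)"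
    and e2_kernel[measurable]: "e2 \<in> MX \<Otimes>\<^sub>M count_space W1 \<rightarrow>\<^sub>M prob_algebra (count_space W2)"
    and g1_kernel[measurable]: "g1 \<in> count_space W1 \<rightarrow>\<^sub>M prob_algebra MY1"
    and g2_kernel[measurable]: "g2 \<in> count_space W1 \<Otimes>\<^sub>M count_space W2 \<rightarrow>\<^sub>M prob_algebra MY2"
    and finite_W1: "finite W1" and finite_W2: "finite W2"
begin

abbreviation "P \<equiv> joint_law MX MY1 MY2 e1 e2 g1 g2"

lemma joint_law_kernel:
  "(\<lambda>x. e1 x \<bind> (\<lambda>w1. e2 (x, w1) \<bind> (\<lambda>w2. g1 w1 \<bind> (\<lambda>y1. g2 (w1, w2) \<bind>
       (\<lambda>y2. return (MX \<Otimes>\<^sub>M MY1 \<Otimes>\<^sub>M MY2) (x, y1, y2))))))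
     \<in> MX \<rightarrow>\<^sub>M prob_algebra (MX \<Otimes>\<^sub>M MY1 \<Otimes>\<^sub>M MY2)"
  by measurable

lemma MX_in_prob_algebra: "MX \<in> space (prob_algebra MX)"
  using prob_space_MX by (simp add: space_prob_algebra)

lemma prob_space_joint_law: "prob_space P"
  unfolding joint_law_def by (rule prob_space_bind'[OF MX_in_prob_algebra joint_law_kernel])

lemma sets_joint_law: "sets P = sets (MX \<Otimes>\<^sub>M MY1 \<Otimes>\<^sub>M MY2)"
  unfolding joint_law_def by (rule sets_bind'[OF MX_in_prob_algebra joint_law_kernel])

lemma messages_nonempty: "W1 \<noteq> {}" "W2 \<noteq> {}"
proof -
  obtain x where x: "x \<in> space MX" using prob_space.not_empty[OF prob_space_MX] by blast
  show "W1 \<noteq> {}"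
    using prob_space.not_empty[OF prob_kernel_value(1)[OF e1_kernel x]] prob_kernel_value(3)[OF e1_kernel x]
    by simp
  then obtain w1 where "w1 \<in> W1" by blast
  with x have xw1: "(x, w1) \<in> space (MX \<Otimes>\<^sub>M count_space W1)" by (simp add: space_pair_measure)
  show "W2 \<noteq> {}"
    using prob_space.not_empty[OF prob_kernel_value(1)[OF e2_kernel xw1]] prob_kernel_value(3)[OF e2_kernel xw1]
    by simp
qed

lemma sets_joint_law_Collect:
  assumes "Measurable.pred (MX \<Otimes>\<^sub>M MY1 \<Otimes>\<^sub>M MY2) (\<lambda>z. Q (fst z) (fst (snd z)) (snd (snd z)))"
  shows "{(x, y1, y2) \<in> space P. Q x y1 y2} \<in> sets P"
proof -
  have "{(x, y1, y2) \<in> space P. Q x y1 y2} = {z \<in> space P. Q (fst z) (fst (snd z)) (snd (snd z))}"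
    by auto
  then show ?thesis
    using assms sets_eq_imp_space_eq[OF sets_joint_law] by (simp add: sets_joint_law)
qed

lemma nn_integral_decoders:
  assumes f[measurable]: "f \<in> borel_measurable (MX \<Otimes>\<^sub>M MY1 \<Otimes>\<^sub>M MY2)"
    and x[measurable]: "x \<in> space MX" and w1[measurable]: "w1 \<in> space (count_space W1)"
    and w2[measurable]: "w2 \<in> space (count_space W2)"
  shows "(\<integral>\<^sup>+z. f z \<partial>(g1 w1 \<bind> (\<lambda>y1. g2 (w1, w2) \<bind>
            (\<lambda>y2. return (MX \<Otimes>\<^sub>M MY1 \<Otimes>\<^sub>M MY2) (x, y1, y2)))))
    = (\<integral>\<^sup>+y1. \<integral>\<^sup>+y2. f (x, y1, y2) \<partial>g2 (w1, w2) \<partial>g1 w1)"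
proof (subst nn_integral_bind_kernel[OF prob_kernel_value(2)[OF g1_kernel w1] _ f], measurable,
    intro nn_integral_cong)
  have w12: "(w1, w2) \<in> space (count_space W1 \<Otimes>\<^sub>M count_space W2)"
    using w1 w2 by (simp add: space_pair_measure)
  fix y1 assume "y1 \<in> space (g1 w1)"
  then have y1[measurable]: "y1 \<in> space MY1" using prob_kernel_value(3)[OF g1_kernel w1] by simp
  show "(\<integral>\<^sup>+z. f z \<partial>(g2 (w1, w2) \<bind> (\<lambda>y2. return (MX \<Otimes>\<^sub>M MY1 \<Otimes>\<^sub>M MY2) (x, y1, y2))))
    = (\<integral>\<^sup>+y2. f (x, y1, y2) \<partial>g2 (w1, w2))"
  proof (subst nn_integral_bind_kernel[OF prob_kernel_value(2)[OF g2_kernel w12] _ f], measurable,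
      intro nn_integral_cong)
    fix y2 assume "y2 \<in> space (g2 (w1, w2))"
    then have "y2 \<in> space MY2" using prob_kernel_value(3)[OF g2_kernel w12] by simp
    then show "(\<integral>\<^sup>+z. f z \<partial>return (MX \<Otimes>\<^sub>M MY1 \<Otimes>\<^sub>M MY2) (x, y1, y2)) = f (x, y1, y2)"
      using x y1 by (intro nn_integral_return) (auto simp: space_pair_measure)
  qed
qed

lemma nn_integral_joint_law:
  assumes f[measurable]: "f \<in> borel_measurable (MX \<Otimes>\<^sub>M MY1 \<Otimes>\<^sub>M MY2)"
  shows "(\<integral>\<^sup>+z. f z \<partial>P) =
    (\<integral>\<^sup>+x. \<integral>\<^sup>+w1. \<integral>\<^sup>+w2. \<integral>\<^sup>+y1. \<integral>\<^sup>+y2. f (x, y1, y2) \<partial>g2 (w1, w2) \<partial>g1 w1 \<partial>e2 (x, w1) \<partial>e1 x \<partial>MX)"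
  unfolding joint_law_def
proof (subst nn_integral_bind_kernel[OF refl joint_law_kernel f], intro nn_integral_cong)
  fix x assume x[measurable]: "x \<in> space MX"
  show "(\<integral>\<^sup>+z. f z \<partial>(e1 x \<bind> (\<lambda>w1. e2 (x, w1) \<bind> (\<lambda>w2. g1 w1 \<bind> (\<lambda>y1. g2 (w1, w2) \<bind>
          (\<lambda>y2. return (MX \<Otimes>\<^sub>M MY1 \<Otimes>\<^sub>M MY2) (x, y1, y2)))))))
      = (\<integral>\<^sup>+w1. \<integral>\<^sup>+w2. \<integral>\<^sup>+y1. \<integral>\<^sup>+y2. f (x, y1, y2) \<partial>g2 (w1, w2) \<partial>g1 w1 \<partial>e2 (x, w1) \<partial>e1 x)"
  proof (subst nn_integral_bind_kernel[OF prob_kernel_value(2)[OF e1_kernel x] _ f], measurable,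
      intro nn_integral_cong)
    fix w1 assume "w1 \<in> space (e1 x)"
    then have w1[measurable]: "w1 \<in> space (count_space W1)" using prob_kernel_value(3)[OF e1_kernel x] by simp
    have xw1: "(x, w1) \<in> space (MX \<Otimes>\<^sub>M count_space W1)" using x w1 by (simp add: space_pair_measure)
    show "(\<integral>\<^sup>+z. f z \<partial>(e2 (x, w1) \<bind> (\<lambda>w2. g1 w1 \<bind> (\<lambda>y1. g2 (w1, w2) \<bind>
          (\<lambda>y2. return (MX \<Otimes>\<^sub>M MY1 \<Otimes>\<^sub>M MY2) (x, y1, y2))))))
      = (\<integral>\<^sup>+w2. \<integral>\<^sup>+y1. \<integral>\<^sup>+y2. f (x, y1, y2) \<partial>g2 (w1, w2) \<partial>g1 w1 \<partial>e2 (x, w1))"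
      using prob_kernel_value(3)[OF e2_kernel xw1]
      by (subst nn_integral_bind_kernel[OF prob_kernel_value(2)[OF e2_kernel xw1] _ f], measurable)
        (auto intro!: nn_integral_cong nn_integral_decoders[OF f x w1])
  qed
qed

lemma nn_integral_joint_law_fst_le:
  assumes h[measurable]: "h \<in> borel_measurable (MX \<Otimes>\<^sub>M MY1)"
    and sections: "\<And>y1. y1 \<in> space MY1 \<Longrightarrow> (\<integral>\<^sup>+x. h (x, y1) \<partial>MX) \<le> 1"
  shows "(\<integral>\<^sup>+z. h (fst z, fst (snd z)) \<partial>P) \<le> of_nat (card W1)"
proof -
  have "(\<integral>\<^sup>+z. h (fst z, fst (snd z)) \<partial>P) = (\<integral>\<^sup>+x. \<integral>\<^sup>+w1. \<integral>\<^sup>+y1. h (x, y1) \<partial>g1 w1 \<partial>e1 x \<partial>MX)"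
  proof (subst nn_integral_joint_law, measurable, unfold prod.sel, intro nn_integral_cong)
    fix x w1 assume x: "x \<in> space MX" and "w1 \<in> space (e1 x)"
    then have "(x, w1) \<in> space (MX \<Otimes>\<^sub>M count_space W1)"
      using prob_kernel_value(3)[OF e1_kernel x] by (simp add: space_pair_measure)
    note e2_prob = prob_kernel_value(1,3)[OF e2_kernel this]
    have "(\<integral>\<^sup>+y2. c \<partial>g2 (w1, w2)) = c" if "w2 \<in> space (e2 (x, w1))" for c w2
      using \<open>w1 \<in> space (e1 x)\<close> that prob_kernel_value(3)[OF e1_kernel x] e2_prob(2)
        prob_space.emeasure_space_1[OF prob_kernel_value(1)[OF g2_kernel, of "(w1, w2)"]]
      by (simp add: space_pair_measure)
    then show "(\<integral>\<^sup>+w2. \<integral>\<^sup>+y1. \<integral>\<^sup>+y2. h (x, y1) \<partial>g2 (w1, w2) \<partial>g1 w1 \<partial>e2 (x, w1))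
        = (\<integral>\<^sup>+y1. h (x, y1) \<partial>g1 w1)"
      using prob_space.emeasure_space_1[OF e2_prob(1)] by (simp cong: nn_integral_cong)
  qed
  also have "\<dots> \<le> (\<integral>\<^sup>+x. (\<Sum>w1\<in>W1. \<integral>\<^sup>+y1. h (x, y1) \<partial>g1 w1) \<partial>MX)"
    using prob_kernel_value[OF e1_kernel] finite_W1
    by (intro nn_integral_mono nn_integral_le_sum_count_space) (auto intro: prob_space_imp_subprob_space)
  also have "\<dots> \<le> of_nat (card W1)"
  proof (rule nn_integral_sum_le_card[OF finite_W1])
    fix w1 assume "w1 \<in> W1"
    note g1_prob = prob_kernel_value(1,2)[OF g1_kernel, of w1]
    show "(\<lambda>x. \<integral>\<^sup>+y1. h (x, y1) \<partial>g1 w1) \<in> borel_measurable MX"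
      and "(\<integral>\<^sup>+x. \<integral>\<^sup>+y1. h (x, y1) \<partial>g1 w1 \<partial>MX) \<le> 1"
      using \<open>w1 \<in> W1\<close> sections
      by (auto intro!: nn_integral_fubini_le[OF prob_space_imp_sigma_finite[OF prob_space_MX] _ _ h] g1_prob)
  qed
  finally show ?thesis .
qed

lemma nn_integral_joint_law_le:
  assumes h[measurable]: "h \<in> borel_measurable (MX \<Otimes>\<^sub>M MY1 \<Otimes>\<^sub>M MY2)"
    and sections: "\<And>y1 y2. y1 \<in> space MY1 \<Longrightarrow> y2 \<in> space MY2 \<Longrightarrow> (\<integral>\<^sup>+x. h (x, y1, y2) \<partial>MX) \<le> 1"
  shows "(\<integral>\<^sup>+z. h z \<partial>P) \<le> of_nat (card W1 * card W2)"
proof -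
  define F where "F w x = (\<integral>\<^sup>+y1. \<integral>\<^sup>+y2. h (x, y1, y2) \<partial>g2 w \<partial>g1 (fst w))" for w x
  have "(\<integral>\<^sup>+z. h z \<partial>P) = (\<integral>\<^sup>+x. \<integral>\<^sup>+w1. \<integral>\<^sup>+w2. F (w1, w2) x \<partial>e2 (x, w1) \<partial>e1 x \<partial>MX)"
    unfolding F_def by (simp add: nn_integral_joint_law)
  also have "\<dots> \<le> (\<integral>\<^sup>+x. (\<Sum>w1\<in>W1. \<Sum>w2\<in>W2. F (w1, w2) x) \<partial>MX)"
  proof (rule nn_integral_mono)
    fix x assume x: "x \<in> space MX"
    have "(\<integral>\<^sup>+w1. \<integral>\<^sup>+w2. F (w1, w2) x \<partial>e2 (x, w1) \<partial>e1 x) \<le> (\<Sum>w1\<in>W1. \<integral>\<^sup>+w2. F (w1, w2) x \<partial>e2 (x, w1))"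
      using prob_kernel_value[OF e1_kernel x] finite_W1
      by (intro nn_integral_le_sum_count_space) (auto intro: prob_space_imp_subprob_space)
    also have "\<dots> \<le> (\<Sum>w1\<in>W1. \<Sum>w2\<in>W2. F (w1, w2) x)"
    proof (rule sum_mono)
      fix w1 assume "w1 \<in> W1"
      then have "(x, w1) \<in> space (MX \<Otimes>\<^sub>M count_space W1)" using x by (simp add: space_pair_measure)
      then show "(\<integral>\<^sup>+w2. F (w1, w2) x \<partial>e2 (x, w1)) \<le> (\<Sum>w2\<in>W2. F (w1, w2) x)"
        using prob_kernel_value[OF e2_kernel] finite_W2
        by (intro nn_integral_le_sum_count_space) (auto intro: prob_space_imp_subprob_space)
    qed
    finally show "(\<integral>\<^sup>+w1. \<integral>\<^sup>+w2. F (w1, w2) x \<partial>e2 (x, w1) \<partial>e1 x) \<le> (\<Sum>w1\<in>W1. \<Sum>w2\<in>W2. F (w1, w2) x)" .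
  qed
  also have "\<dots> = (\<integral>\<^sup>+x. (\<Sum>w\<in>W1 \<times> W2. F w x) \<partial>MX)"
    by (simp add: sum.cartesian_product)
  also have "\<dots> \<le> of_nat (card (W1 \<times> W2))"
  proof (rule nn_integral_sum_le_card)
    fix w assume "w \<in> W1 \<times> W2"
    then have "fst w \<in> space (count_space W1)" "w \<in> space (count_space W1 \<Otimes>\<^sub>M count_space W2)"
      by (auto simp: space_pair_measure)
    note nn_integral_fubini_pair_le[OF prob_space_imp_sigma_finite[OF prob_space_MX]
        prob_kernel_value(1)[OF g1_kernel this(1)] prob_kernel_value(1)[OF g2_kernel this(2)]
        prob_kernel_value(2)[OF g1_kernel this(1)] prob_kernel_value(2)[OF g2_kernel this(2)] h sections]
    then show "F w \<in> borel_measurable MX" and "(\<integral>\<^sup>+x. F w x \<partial>MX) \<le> 1"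
      unfolding F_def by auto
  qed (simp add: finite_W1 finite_W2)
  finally show ?thesis by (simp add: card_cartesian_product)
qed

lemma first_stage_converse:
  fixes dist1 :: "'x \<Rightarrow> 'y1 \<Rightarrow> real" and \<beta>1 :: "'x \<Rightarrow> real" and \<beta>2 :: "'x \<Rightarrow> 'y1 \<Rightarrow> real"
  assumes dist1_meas: "(\<lambda>(x, y). dist1 x y) \<in> borel_measurable (MX \<Otimes>\<^sub>M MY1)"
    and \<beta>1_meas[measurable]: "\<beta>1 \<in> borel_measurable MX"
    and \<beta>2_meas: "(\<lambda>(x, y). \<beta>2 x y) \<in> borel_measurable (MX \<Otimes>\<^sub>M MY1)"
    and \<beta>1_pos: "\<And>x. x \<in> space MX \<Longrightarrow> \<beta>1 x > 0"
    and \<beta>2_pos: "\<And>x y. x \<in> space MX \<Longrightarrow> y \<in> space MY1 \<Longrightarrow> \<beta>2 x y > 0"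
    and "lam1 \<ge> 0" and "\<nu>1 \<ge> 0"
    and Sigma1_le: "\<And>y1. y1 \<in> space MY1 \<Longrightarrow> Sigma1 MX dist1 \<beta>1 \<beta>2 lam1 \<nu>1 y1 \<le> 1"
    and card_le: "real (card W1) \<le> M"
  shows "measure P {(x, y1, y2) \<in> space P.
            ln (\<beta>2 x y1 powr (1 / (1 + \<nu>1)) / \<beta>1 x) - lam1 / (1 + \<nu>1) * d \<ge> ln M + \<gamma>}
    \<le> measure P {(x, y1, y2) \<in> space P. \<not> dist1 x y1 \<le> d} + exp (- \<gamma>)"
proof -
  note [measurable] = dist1_meas[unfolded case_prod_beta'] \<beta>2_meas[unfolded case_prod_beta']
    measurable_pair_fst_fst_snd[OF dist1_meas, of MY2, simplified]
    measurable_pair_fst_fst_snd[OF \<beta>2_meas, of MY2, simplified]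
  define h where "h p = ennreal (exp (- (lam1 / (1 + \<nu>1)) * dist1 (fst p) (snd p))
    * \<beta>2 (fst p) (snd p) powr (1 / (1 + \<nu>1)) / \<beta>1 (fst p))" for p
  have h_meas[measurable]: "h \<in> borel_measurable (MX \<Otimes>\<^sub>M MY1)" unfolding h_def by measurable
  have card_pos: "real (card W1) > 0" using messages_nonempty finite_W1 by (simp add: card_gt_0_iff)
  show ?thesis
  proof (rule measure_le_add_exp_of_weight[OF prob_space_imp_subprob_space[OF prob_space_joint_law]])
    show "{(x, y1, y2) \<in> space P.
            ln (\<beta>2 x y1 powr (1 / (1 + \<nu>1)) / \<beta>1 x) - lam1 / (1 + \<nu>1) * d \<ge> ln M + \<gamma>} \<in> sets P"
      by (rule sets_joint_law_Collect) measurable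
    show "{(x, y1, y2) \<in> space P. \<not> dist1 x y1 \<le> d} \<in> sets P"
      by (rule sets_joint_law_Collect) measurable
    show "(\<lambda>z. h (fst z, fst (snd z))) \<in> borel_measurable P"
      by (simp add: sets_joint_law cong: measurable_cong_sets)
    have "(\<integral>\<^sup>+z. h (fst z, fst (snd z)) \<partial>P) \<le> of_nat (card W1)"
      using Sigma1_le by (intro nn_integral_joint_law_fst_le h_meas) (simp add: Sigma1_def h_def)
    then show "(\<integral>\<^sup>+z. h (fst z, fst (snd z)) \<partial>P) \<le> ennreal (real (card W1))"
      by (simp add: ennreal_of_nat_eq_real_of_nat)
    show "real (card W1) > 0" by (fact card_pos)
    fix z assume "z \<in> space P"
      and E: "z \<in> {(x, y1, y2) \<in> space P.
            ln (\<beta>2 x y1 powr (1 / (1 + \<nu>1)) / \<beta>1 x) - lam1 / (1 + \<nu>1) * d \<ge> ln M + \<gamma>}"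
      and A: "z \<notin> {(x, y1, y2) \<in> space P. \<not> dist1 x y1 \<le> d}"
    obtain x y1 y2 where z: "z = (x, y1, y2)" by (cases z)
    have x: "x \<in> space MX" and y1: "y1 \<in> space MY1"
      using \<open>z \<in> space P\<close> sets_eq_imp_space_eq[OF sets_joint_law] by (auto simp: z space_pair_measure)
    have "dist1 x y1 \<le> d" using A \<open>z \<in> space P\<close> by (simp add: z)
    then have "lam1 / (1 + \<nu>1) * dist1 x y1 \<le> lam1 / (1 + \<nu>1) * d"
      using \<open>lam1 \<ge> 0\<close> \<open>\<nu>1 \<ge> 0\<close> by (intro mult_left_mono) simp_all
    then have "real (card W1) * exp \<gamma> \<le> exp (- (lam1 / (1 + \<nu>1) * dist1 x y1)) * (\<beta>2 x y1 powr (1 / (1 + \<nu>1)) / \<beta>1 x)"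
      using E card_pos card_le \<beta>1_pos[OF x] \<beta>2_pos[OF x y1]
      by (intro mult_exp_le_of_ln_add_le) (auto simp: z)
    then show "ennreal (real (card W1) * exp \<gamma>) \<le> h (fst z, fst (snd z))"
      by (simp add: h_def z ennreal_leI)
  qed
qed

lemma second_stage_converse:
  fixes dist1 :: "'x \<Rightarrow> 'y1 \<Rightarrow> real" and dist2 :: "'x \<Rightarrow> 'y2 \<Rightarrow> real"
    and \<beta>1 :: "'x \<Rightarrow> real" and \<beta>2 :: "'x \<Rightarrow> 'y1 \<Rightarrow> real"
  assumes dist1_meas: "(\<lambda>(x, y). dist1 x y) \<in> borel_measurable (MX \<Otimes>\<^sub>M MY1)"
    and dist2_meas: "(\<lambda>(x, y). dist2 x y) \<in> borel_measurable (MX \<Otimes>\<^sub>M MY2)"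
    and \<beta>1_meas[measurable]: "\<beta>1 \<in> borel_measurable MX"
    and \<beta>2_meas: "(\<lambda>(x, y). \<beta>2 x y) \<in> borel_measurable (MX \<Otimes>\<^sub>M MY1)"
    and \<beta>1_pos: "\<And>x. x \<in> space MX \<Longrightarrow> \<beta>1 x > 0"
    and \<beta>2_pos: "\<And>x y. x \<in> space MX \<Longrightarrow> y \<in> space MY1 \<Longrightarrow> \<beta>2 x y > 0"
    and "lam1 \<ge> 0" and "lam2 \<ge> 0" and "\<nu>1 \<ge> 0"
    and Sigma2_le: "\<And>y1 y2. y1 \<in> space MY1 \<Longrightarrow> y2 \<in> space MY2 \<Longrightarrow>
                      Sigma2 MX dist1 dist2 \<beta>1 \<beta>2 lam1 lam2 \<nu>1 y1 y2 \<le> 1"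
    and card_le: "real (card W1 * card W2) \<le> M"
  shows "measure P {(x, y1, y2) \<in> space P.
            ln (\<beta>2 x y1 powr (- \<nu>1 / (1 + \<nu>1)) / \<beta>1 x) - lam1 / (1 + \<nu>1) * d - lam2 * d'
              \<ge> ln M + \<gamma>}
    \<le> measure P {(x, y1, y2) \<in> space P. \<not> (dist1 x y1 \<le> d \<and> dist2 x y2 \<le> d')} + exp (- \<gamma>)"
proof -
  note [measurable] =
    measurable_pair_fst_fst_snd[OF dist1_meas, of MY2, simplified]
    measurable_pair_fst_snd_snd[OF dist2_meas, of MY1, simplified]
    measurable_pair_fst_fst_snd[OF \<beta>2_meas, of MY2, simplified]
  define h where "h z = ennreal (exp (- (lam1 / (1 + \<nu>1)) * dist1 (fst z) (fst (snd z))
      - lam2 * dist2 (fst z) (snd (snd z))) / (\<beta>1 (fst z) * \<beta>2 (fst z) (fst (snd z)) powr (\<nu>1 / (1 + \<nu>1))))"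
    for z
  have h_meas[measurable]: "h \<in> borel_measurable (MX \<Otimes>\<^sub>M MY1 \<Otimes>\<^sub>M MY2)" unfolding h_def by measurable
  have card_pos: "real (card W1 * card W2) > 0"
    using messages_nonempty finite_W1 finite_W2 by (simp add: card_gt_0_iff)
  show ?thesis
  proof (rule measure_le_add_exp_of_weight[OF prob_space_imp_subprob_space[OF prob_space_joint_law]])
    show "{(x, y1, y2) \<in> space P. ln (\<beta>2 x y1 powr (- \<nu>1 / (1 + \<nu>1)) / \<beta>1 x)
        - lam1 / (1 + \<nu>1) * d - lam2 * d' \<ge> ln M + \<gamma>} \<in> sets P"
      by (rule sets_joint_law_Collect) measurable
    show "{(x, y1, y2) \<in> space P. \<not> (dist1 x y1 \<le> d \<and> dist2 x y2 \<le> d')} \<in> sets P"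
      by (rule sets_joint_law_Collect) measurable
    show "h \<in> borel_measurable P"
      by (simp add: sets_joint_law cong: measurable_cong_sets)
    have "(\<integral>\<^sup>+z. h z \<partial>P) \<le> of_nat (card W1 * card W2)"
      using Sigma2_le by (intro nn_integral_joint_law_le h_meas) (simp add: Sigma2_def h_def)
    then show "(\<integral>\<^sup>+z. h z \<partial>P) \<le> ennreal (real (card W1 * card W2))"
      by (simp only: ennreal_of_nat_eq_real_of_nat)
    show "real (card W1 * card W2) > 0" by (fact card_pos)
    fix z assume "z \<in> space P"
      and E: "z \<in> {(x, y1, y2) \<in> space P. ln (\<beta>2 x y1 powr (- \<nu>1 / (1 + \<nu>1)) / \<beta>1 x)
        - lam1 / (1 + \<nu>1) * d - lam2 * d' \<ge> ln M + \<gamma>}"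
      and A: "z \<notin> {(x, y1, y2) \<in> space P. \<not> (dist1 x y1 \<le> d \<and> dist2 x y2 \<le> d')}"
    obtain x y1 y2 where z: "z = (x, y1, y2)" by (cases z)
    have x: "x \<in> space MX" and y1: "y1 \<in> space MY1"
      using \<open>z \<in> space P\<close> sets_eq_imp_space_eq[OF sets_joint_law] by (auto simp: z space_pair_measure)
    have "dist1 x y1 \<le> d" "dist2 x y2 \<le> d'" using A \<open>z \<in> space P\<close> by (simp_all add: z)
    then have "lam1 / (1 + \<nu>1) * dist1 x y1 + lam2 * dist2 x y2 \<le> lam1 / (1 + \<nu>1) * d + lam2 * d'"
      using \<open>lam1 \<ge> 0\<close> \<open>lam2 \<ge> 0\<close> \<open>\<nu>1 \<ge> 0\<close> by (intro add_mono mult_left_mono) simp_all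
    then have "real (card W1 * card W2) * exp \<gamma>
        \<le> exp (- (lam1 / (1 + \<nu>1) * dist1 x y1 + lam2 * dist2 x y2)) * (\<beta>2 x y1 powr (- \<nu>1 / (1 + \<nu>1)) / \<beta>1 x)"
      using E card_pos card_le \<beta>1_pos[OF x] \<beta>2_pos[OF x y1]
      by (intro mult_exp_le_of_ln_add_le) (auto simp: z algebra_simps)
    also have "\<dots> = exp (- (lam1 / (1 + \<nu>1)) * dist1 x y1 - lam2 * dist2 x y2)
        / (\<beta>1 x * \<beta>2 x y1 powr (\<nu>1 / (1 + \<nu>1)))"
    proof -
      have "\<beta>2 x y1 powr (- \<nu>1 / (1 + \<nu>1)) = 1 / \<beta>2 x y1 powr (\<nu>1 / (1 + \<nu>1))"
        by (simp add: powr_minus_divide)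
      moreover have "- (lam1 / (1 + \<nu>1) * dist1 x y1 + lam2 * dist2 x y2)
          = - (lam1 / (1 + \<nu>1)) * dist1 x y1 - lam2 * dist2 x y2"
        by simp
      ultimately show ?thesis by simp
    qed
    finally show "ennreal (real (card W1 * card W2) * exp \<gamma>) \<le> h z"
      by (simp add: h_def z ennreal_leI)
  qed
qed

end

theorem mainTheorem5:
  fixes MX :: "'x measure" and MY1 :: "'y1 measure" and MY2 :: "'y2 measure"
    and dist1 :: "'x \<Rightarrow> 'y1 \<Rightarrow> real" and dist2 :: "'x \<Rightarrow> 'y2 \<Rightarrow> real"
    and \<beta>1 :: "'x \<Rightarrow> real" and \<beta>2 :: "'x \<Rightarrow> 'y1 \<Rightarrow> real"
    and lam1 lam2 \<nu>1 :: real
    and M1 M2 :: nat and d1 d2 \<epsilon>1 \<epsilon>2 :: real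
    and e1 :: "'x \<Rightarrow> nat measure" and e2 :: "'x \<times> nat \<Rightarrow> nat measure"
    and g1 :: "nat \<Rightarrow> 'y1 measure" and g2 :: "nat \<times> nat \<Rightarrow> 'y2 measure"
    and \<gamma>1 \<gamma>2 :: real
  assumes PX: "prob_space MX"
    and sing_X: "\<And>x. x \<in> space MX \<Longrightarrow> {x} \<in> sets MX"
    and sing_Y1: "\<And>y. y \<in> space MY1 \<Longrightarrow> {y} \<in> sets MY1"
    and sing_Y2: "\<And>y. y \<in> space MY2 \<Longrightarrow> {y} \<in> sets MY2"
    and dist1_meas: "(\<lambda>(x, y). dist1 x y) \<in> borel_measurable (MX \<Otimes>\<^sub>M MY1)"
    and dist2_meas: "(\<lambda>(x, y). dist2 x y) \<in> borel_measurable (MX \<Otimes>\<^sub>M MY2)"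
    and dist1_nonneg: "\<And>x y. x \<in> space MX \<Longrightarrow> y \<in> space MY1 \<Longrightarrow> dist1 x y \<ge> 0"
    and dist2_nonneg: "\<And>x y. x \<in> space MX \<Longrightarrow> y \<in> space MY2 \<Longrightarrow> dist2 x y \<ge> 0"
    and \<beta>1_meas: "\<beta>1 \<in> borel_measurable MX"
    and \<beta>2_meas: "(\<lambda>(x, y). \<beta>2 x y) \<in> borel_measurable (MX \<Otimes>\<^sub>M MY1)"
    and \<beta>1_pos: "\<And>x. x \<in> space MX \<Longrightarrow> \<beta>1 x > 0"
    and \<beta>2_pos: "\<And>x y. x \<in> space MX \<Longrightarrow> y \<in> space MY1 \<Longrightarrow> \<beta>2 x y > 0"
    and lam1_nonneg: "lam1 \<ge> 0" and lam2_nonneg: "lam2 \<ge> 0" and \<nu>1_nonneg: "\<nu>1 \<ge> 0"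
    and Sigma1_le: "\<And>y1. y1 \<in> space MY1 \<Longrightarrow> Sigma1 MX dist1 \<beta>1 \<beta>2 lam1 \<nu>1 y1 \<le> 1"
    and Sigma2_le: "\<And>y1 y2. y1 \<in> space MY1 \<Longrightarrow> y2 \<in> space MY2 \<Longrightarrow>
                      Sigma2 MX dist1 dist2 \<beta>1 \<beta>2 lam1 lam2 \<nu>1 y1 y2 \<le> 1"
    and code: "is_code MX MY1 MY2 dist1 dist2 M1 M2 d1 d2 \<epsilon>1 \<epsilon>2 e1 e2 g1 g2"
    and \<gamma>1_pos: "\<gamma>1 > 0" and \<gamma>2_pos: "\<gamma>2 > 0"
  shows "\<epsilon>1 \<ge> measure (joint_law MX MY1 MY2 e1 e2 g1 g2)
            {(x, y1, y2) \<in> space (joint_law MX MY1 MY2 e1 e2 g1 g2).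
               ln (\<beta>2 x y1 powr (1 / (1 + \<nu>1)) / \<beta>1 x) - lam1 / (1 + \<nu>1) * d1
                 \<ge> ln (real M1) + \<gamma>1} - exp (- \<gamma>1)
    \<and> \<epsilon>2 \<ge> measure (joint_law MX MY1 MY2 e1 e2 g1 g2)
            {(x, y1, y2) \<in> space (joint_law MX MY1 MY2 e1 e2 g1 g2).
               ln (\<beta>2 x y1 powr (- \<nu>1 / (1 + \<nu>1)) / \<beta>1 x) - lam1 / (1 + \<nu>1) * d1 - lam2 * d2
                 \<ge> ln (real M2) + \<gamma>2} - exp (- \<gamma>2)"
proof -
  have [simp]: "M1 * (M2 div M1) \<le> M2" by (simp add: times_div_less_eq_dividend)
  from code have kernels: "two_stage_code_kernels MX MY1 MY2 {1..M1} {1..M2 div M1} e1 e2 g1 g2"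
    and err1: "measure (joint_law MX MY1 MY2 e1 e2 g1 g2)
      {(x, y1, y2) \<in> space (joint_law MX MY1 MY2 e1 e2 g1 g2). \<not> dist1 x y1 \<le> d1} \<le> \<epsilon>1"
    and err2: "measure (joint_law MX MY1 MY2 e1 e2 g1 g2)
      {(x, y1, y2) \<in> space (joint_law MX MY1 MY2 e1 e2 g1 g2). \<not> (dist1 x y1 \<le> d1 \<and> dist2 x y2 \<le> d2)} \<le> \<epsilon>2"
    using PX by (auto simp: is_code_def two_stage_code_kernels_def Let_def)
  show ?thesis
    using two_stage_code_kernels.first_stage_converse[OF kernels dist1_meas \<beta>1_meas \<beta>2_meas \<beta>1_pos \<beta>2_pos
        lam1_nonneg \<nu>1_nonneg Sigma1_le, where M = "real M1" and d = d1 and \<gamma> = \<gamma>1]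
      two_stage_code_kernels.second_stage_converse[OF kernels dist1_meas dist2_meas \<beta>1_meas \<beta>2_meas
        \<beta>1_pos \<beta>2_pos lam1_nonneg lam2_nonneg \<nu>1_nonneg Sigma2_le, where M = "real M2" and d = d1 and d' = d2 and \<gamma> = \<gamma>2]
      err1 err2
    by (simp del: of_nat_mult add: of_nat_mult[symmetric])
qed

end
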